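(* Let $d\ge1$, $\beta\in[0,1]$, $0<\lambda<\Lambda$, $\delta>0$, $T,R\in(0,1]$, $\underline{T}\in(0,T)$ and $(x_0,v_0)\in\mathbb{T}^d\times\mathbb{R}^d$. Let $h$ be a classical solution with $0\le h\le\Lambda$ of \[ (\partial_t+v\cdot\nabla_x)h=\mathscr{R}_h(t,x)\,(\nabla_v-v)\cdot\nabla_vh,\qquad \mathscr{R}_h=\Big(\int_{\mathbb{R}^d}h\,d\mu\Big)^\beta, \] in $(0,T]\times\mathbb{T}^d\times\mathbb{R}^d$ such that for all $t\in[0,T]$, $h(t,x,v)\ge\delta\mathbb{1}_{\{|x-x_0-tv_0|<R,\,|v-v_0|<R\}}$. Then there is a constant $\underline{C}>0$ depending only on $d,\beta,\lambda,\Lambda,\underline{T},\delta,R,v_0$ such that for all $t\in[\underline{T},T]$ and $(x,v)\in\mathbb{T}^d\times\mathbb{R}^d$, \[ h(t,x,v)\ge\underline{C}^{-1}e^{-\underline{C}|v|^4}\mathbb{1}_{\{|x-x_0-tv_0|<R/2\}}. \]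
   Context: $\mathbb{T}^d$ is the unit-volume torus with its distance; $d\mu=(2\pi)^{-d/2}e^{-|v|^2/2}dv$. A classical solution is nonnegative, satisfies the equation pointwise and matches the initial data continuously. *)

theory Defs
  imports "HOL-Analysis.Analysis"
begin

text \<open>The unit-volume torus T^d is represented by R^d = real^'n modulo the
integer lattice: functions on T^d are Z^d-periodic functions on R^d.\<close>

definition int_vec :: "real^'n \<Rightarrow> bool" where
  "int_vec z \<longleftrightarrow> (\<forall>i. z $ i \<in> \<int>)"

definition torus_dist :: "real^'n \<Rightarrow> real^'n \<Rightarrow> real" where
  "torus_dist x y = Inf {norm (x - y - z) | z. int_vec z}"

definition gauss :: "real^'n \<Rightarrow> real" where
  "gauss v = (2 * pi) powr (- real CARD('n) / 2) * exp (- (norm v)\<^sup>2 / 2)"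

definition mu_integral :: "(real^'n \<Rightarrow> real) \<Rightarrow> real" where
  "mu_integral f = integral\<^sup>L lborel (\<lambda>v. f v * gauss v)"

text \<open>The power a^beta for a \<ge> 0, with the convention 0^0 = 1.\<close>
definition pow_beta :: "real \<Rightarrow> real \<Rightarrow> real" where
  "pow_beta a \<beta> = (if a = 0 then (if \<beta> = 0 then 1 else 0) else a powr \<beta>)"

definition Rcoef :: "real \<Rightarrow> (real \<Rightarrow> real^'n \<Rightarrow> real^'n \<Rightarrow> real) \<Rightarrow> real \<Rightarrow> real^'n \<Rightarrow> real" where
  "Rcoef \<beta> h t x = pow_beta (mu_integral (h t x)) \<beta>"

text \<open>Classical solution on (0,T] x T^d x R^d of
  (d_t + v.grad_x) h = R_h (grad_v - v).grad_v h :
  h is Z^d-periodic in x, nonnegative, continuous on [0,T] x T^d x R^d (so it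
  matches its initial datum h(0) continuously), and at every point of
  (0,T] x T^d x R^d the derivatives occurring in the equation exist
  (d_t h one-sided at t = T; grad_v h exists near v and is differentiable at v,
  Delta_v h being the trace of its derivative) and the equation holds.\<close>
definition classical_solution ::
  "real \<Rightarrow> real \<Rightarrow> (real \<Rightarrow> real^'n \<Rightarrow> real^'n \<Rightarrow> real) \<Rightarrow> bool" where
  "classical_solution \<beta> T h \<longleftrightarrow>
     (\<forall>t x v z. int_vec z \<longrightarrow> h t (x + z) v = h t x v) \<and>
     (\<forall>t\<in>{0..T}. \<forall>x v. 0 \<le> h t x v) \<and>
     continuous_on ({0..T} \<times> UNIV \<times> UNIV) (\<lambda>(t, x, v). h t x v) \<and>
     (\<forall>t\<in>{0<..T}. \<forall>x v.
        \<exists>ht gx G Dg.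
          ((\<lambda>s. h s x v) has_real_derivative ht) (at t within {0..T}) \<and>
          ((\<lambda>y. h t y v) has_derivative (\<lambda>w. gx \<bullet> w)) (at x) \<and>
          (\<forall>\<^sub>F u in nhds v. ((\<lambda>u'. h t x u') has_derivative (\<lambda>w. G u \<bullet> w)) (at u)) \<and>
          (G has_derivative Dg) (at v) \<and>
          ht + v \<bullet> gx =
            Rcoef \<beta> h t x * ((\<Sum>i\<in>UNIV. Dg (axis i 1) $ i) - v \<bullet> G v))"

end

theory Submission
  imports Defs "HOL-Probability.Distributions"
begin

text \<open>Since \<open>h \<le> \<Lambda>\<close>, and \<open>h \<ge> \<delta>\<close> on the velocity ball around \<open>v0\<close>, the coefficient \<open>R_h\<close> is
  bounded above and below by positive constants along the tube \<open>|x - x0 - s v0| < R\<close>. On a short time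
  interval \<open>[t - c1/V, t]\<close>, \<open>V = |v| + |v0| + 1\<close>, the solution is compared with the Gaussian
  barrier
    \<open>\<delta> e^(-K (s - s0)) exp (- |v - v0|^2 / \<rho>(s) - |x - x0 - s v0|^2 / \<sigma>) - \<delta> e^(-M0)\<close>,
  whose velocity variance \<open>\<rho>(s)\<close> grows at the smallest possible diffusion rate. It is a strict
  subsolution wherever it is positive, is below \<open>\<delta> \<le> h\<close> at the initial time and negative on
  the lateral boundary, so the maximum principle keeps it below \<open>h\<close>. With \<open>M0 \<sim> V^3\<close> its value at
  \<open>(t, x, v)\<close> is of order \<open>\<delta> e^(-C V^3)\<close>, and \<open>V^3 \<le> 8 (|v|^4 + (|v0| + 1)^4)\<close>.\<close>

section \<open>The Gaussian weight and the diffusion coefficient\<close>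

lemma gauss_pos: "0 < gauss v"
  by (simp add: gauss_def)

lemma integrable_gauss: "integrable lborel (gauss :: real^'n \<Rightarrow> real)"
proof (rule integrableI_nonneg)
  show "gauss \<in> borel_measurable lborel"
    unfolding gauss_def by measurable
  show "AE v in lborel. 0 \<le> gauss v"
    by (simp add: less_imp_le[OF gauss_pos])
  define c where "c = (2 * pi) powr (- real CARD('n) / 2)"
  have factor: "ennreal (gauss v) = ennreal c * (\<Prod>b\<in>Basis. ennreal (exp (- (v \<bullet> b)\<^sup>2 / 2)))"
    for v :: "real^'n"
  proof -
    have "(norm v)\<^sup>2 = (\<Sum>b\<in>Basis. (v \<bullet> b)\<^sup>2)"
      unfolding power2_norm_eq_inner euclidean_inner[of v v] by (simp add: power2_eq_square)
    then have "exp (- (norm v)\<^sup>2 / 2) = (\<Prod>b\<in>Basis. exp (- (v \<bullet> b)\<^sup>2 / 2))"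
      by (simp add: exp_sum[symmetric] sum_divide_distrib[symmetric] sum_negf)
    then show ?thesis
      by (simp add: gauss_def c_def ennreal_mult prod_nonneg prod_ennreal)
  qed
  have "integrable lborel (\<lambda>t::real. sqrt (2 * pi) * normal_density 0 1 t)"
    by simp
  then have "integrable lborel (\<lambda>t::real. exp (- t\<^sup>2 / 2))"
    by (simp add: normal_density_def)
  then have finite_1d: "(\<integral>\<^sup>+t. ennreal (exp (- t\<^sup>2 / 2)) \<partial>lborel) < \<infinity>"
    by (simp add: integrable_iff_bounded)
  have "(\<integral>\<^sup>+v. ennreal (gauss v) \<partial>(lborel :: (real^'n) measure))
      = ennreal c * (\<integral>\<^sup>+v. (\<Prod>b\<in>Basis. ennreal (exp (- (v \<bullet> b)\<^sup>2 / 2))) \<partial>(lborel :: (real^'n) measure))"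
    by (simp add: factor nn_integral_cmult)
  also have "\<dots> = ennreal c * (\<Prod>b\<in>(Basis :: (real^'n) set). \<integral>\<^sup>+t. ennreal (exp (- t\<^sup>2 / 2)) \<partial>lborel)"
    by (subst nn_integral_lborel_prod) auto
  also have "\<dots> < \<infinity>"
    using finite_1d by (simp add: ennreal_mult_less_top less_top power_less_top_ennreal)
  finally show "(\<integral>\<^sup>+v. ennreal (gauss v) \<partial>(lborel :: (real^'n) measure)) < \<infinity>" .
qed

lemma integrable_bounded_mult_gauss:
  fixes f :: "real^'n \<Rightarrow> real"
  assumes "f \<in> borel_measurable lborel" and "\<And>v. \<bar>f v\<bar> \<le> B"
  shows "integrable lborel (\<lambda>v. f v * gauss v)"
proof (rule Bochner_Integration.integrable_bound)
  show "integrable lborel (\<lambda>v. B * gauss (v :: real^'n))"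
    by (intro integrable_mult_right integrable_gauss)
  have "\<bar>f v\<bar> \<le> \<bar>B\<bar>" for v
    using assms(2) abs_ge_self order_trans by blast
  then show "AE v in lborel. norm (f v * gauss v) \<le> norm (B * gauss v)"
    by (intro AE_I2) (simp add: abs_mult mult_right_mono)
  show "(\<lambda>v. f v * gauss v) \<in> borel_measurable lborel"
    using assms(1) unfolding gauss_def by measurable
qed

lemma mu_integral_mono:
  fixes f g :: "real^'n \<Rightarrow> real"
  assumes "f \<in> borel_measurable lborel" "g \<in> borel_measurable lborel"
    and "\<And>v. \<bar>f v\<bar> \<le> B" "\<And>v. \<bar>g v\<bar> \<le> B" and "\<And>v. f v \<le> g v"
  shows "mu_integral f \<le> mu_integral g"
  unfolding mu_integral_def
proof (rule integral_mono)
  show "integrable lborel (\<lambda>v. f v * gauss v)" "integrable lborel (\<lambda>v. g v * gauss v)"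
    by (rule integrable_bounded_mult_gauss[OF assms(1,3)] integrable_bounded_mult_gauss[OF assms(2,4)])+
  show "f v * gauss v \<le> g v * gauss v" for v
    using assms(5) by (rule mult_right_mono) (rule less_imp_le[OF gauss_pos])
qed

lemma mu_integral_cmult: "mu_integral (\<lambda>v. c * f v) = c * mu_integral f"
  by (simp add: mu_integral_def mult.assoc)

lemma mu_integral_indicator_ball_pos:
  assumes "0 < R"
  shows "0 < mu_integral (indicator (ball (v0 :: real^'n) R))"
proof -
  let ?f = "\<lambda>v::real^'n. indicator (ball v0 R) v * gauss v"
  have int: "integrable lborel ?f"
    by (rule integrable_bounded_mult_gauss[where B = 1]) (auto simp: indicator_def)
  have nonneg: "AE v in lborel. 0 \<le> ?f v"
    by (intro AE_I2 mult_nonneg_nonneg) (simp_all add: less_imp_le[OF gauss_pos])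
  have "mu_integral (indicator (ball v0 R)) \<noteq> 0"
  proof
    assume "mu_integral (indicator (ball v0 R)) = 0"
    then have "AE v in lborel. ?f v = 0"
      using integral_nonneg_eq_0_iff_AE[OF int nonneg] by (simp add: mu_integral_def)
    then have "AE v in lborel. v \<notin> ball v0 R"
      by eventually_elim (auto simp: indicator_def gauss_pos[THEN less_imp_neq, THEN not_sym])
    then have "emeasure lborel (ball v0 R) = 0"
      by (subst (asm) AE_iff_measurable[where N = "ball v0 R"]) auto
    moreover have "0 < unit_ball_vol (real CARD('n))"
      by (rule unit_ball_vol_pos) simp
    ultimately show False
      using assms by (simp add: emeasure_ball)
  qed
  moreover have "0 \<le> mu_integral (indicator (ball v0 R))"
    unfolding mu_integral_def by (rule integral_nonneg_AE[OF nonneg])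
  ultimately show ?thesis
    by simp
qed

lemma pow_beta_nonneg: "0 \<le> pow_beta a \<beta>"
  by (simp add: pow_beta_def)

lemma pow_beta_between:
  assumes "0 \<le> \<beta>" "\<beta> \<le> 1" "0 < a" "a \<le> I" "I \<le> b"
  shows "min 1 a \<le> pow_beta I \<beta>" and "pow_beta I \<beta> \<le> max 1 b"
proof -
  have I: "0 < I" "pow_beta I \<beta> = I powr \<beta>"
    using assms by (auto simp: pow_beta_def)
  show "min 1 a \<le> pow_beta I \<beta>"
  proof (cases "I \<le> 1")
    case True
    then have "I powr 1 \<le> I powr \<beta>"
      using I assms by (intro powr_mono') auto
    then show ?thesis
      using I assms by simp
  next
    case False
    then show ?thesis
      using I assms ge_one_powr_ge_zero[of I \<beta>] by simp
  qed
  show "pow_beta I \<beta> \<le> max 1 b"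
  proof (cases "I \<le> 1")
    case True
    then show ?thesis
      using I assms powr_le1[of \<beta> I] by simp
  next
    case False
    then have "I powr \<beta> \<le> I powr 1"
      using assms by (intro powr_mono) auto
    then show ?thesis
      using I assms by simp
  qed
qed

lemma classical_solution_continuous_in_v:
  assumes "classical_solution \<beta> T h" and "s \<in> {0..T}"
  shows "continuous_on UNIV (h s x)"
proof -
  have "continuous_on ({0..T} \<times> UNIV \<times> UNIV) (\<lambda>(t, x, v). h t x v)"
    using assms(1) by (simp add: classical_solution_def)
  then have "continuous_on UNIV (\<lambda>v. (\<lambda>(t, x, v). h t x v) (s, x, v))"
    by (rule continuous_on_compose2) (use assms(2) in \<open>auto intro!: continuous_on_Pair continuous_on_id\<close>)
  then show ?thesis
    by simp
qed

lemma Rcoef_bounds: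
  fixes h :: "real \<Rightarrow> real^'n \<Rightarrow> real^'n \<Rightarrow> real"
  assumes sol: "classical_solution \<beta> T h" and s: "s \<in> {0..T}"
    and \<beta>: "0 \<le> \<beta>" "\<beta> \<le> 1" and "0 < \<delta>" "0 < R"
    and upper: "\<And>v. h s x v \<le> \<Lambda>" and lower: "\<And>v. norm (v - v0) < R \<Longrightarrow> \<delta> \<le> h s x v"
  shows "min 1 (\<delta> * mu_integral (indicator (ball v0 R))) \<le> Rcoef \<beta> h s x"
    and "Rcoef \<beta> h s x \<le> max 1 (\<Lambda> * mu_integral (\<lambda>_::real^'n. 1))"
proof -
  have nonneg: "0 \<le> h s x v" for v
    using sol s by (simp add: classical_solution_def)
  have meas: "h s x \<in> borel_measurable lborel"
    using classical_solution_continuous_in_v[OF sol s]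
    by (simp add: borel_measurable_continuous_onI)
  have bound: "\<bar>h s x v\<bar> \<le> \<Lambda>" for v
    using nonneg[of v] upper[of v] by simp
  have "\<Lambda> \<ge> 0"
    using bound order_trans abs_ge_zero by blast
  have "\<bar>h s x v\<bar> \<le> \<Lambda> + \<delta>" for v
    using bound[of v] \<open>0 < \<delta>\<close> by linarith
  then have "mu_integral (\<lambda>v. \<delta> * indicator (ball v0 R) v) \<le> mu_integral (h s x)"
    using meas lower nonneg \<open>0 < \<delta>\<close> \<open>\<Lambda> \<ge> 0\<close>
    by (intro mu_integral_mono[where B = "\<Lambda> + \<delta>"])
       (auto simp: indicator_def dist_norm norm_minus_commute)
  moreover have "mu_integral (h s x) \<le> mu_integral (\<lambda>v::real^'n. \<Lambda> * 1)"
    using meas bound upper \<open>\<Lambda> \<ge> 0\<close> by (intro mu_integral_mono[where B = \<Lambda>]) auto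
  moreover have "0 < \<delta> * mu_integral (indicator (ball v0 R))"
    using \<open>0 < \<delta>\<close> \<open>0 < R\<close> by (intro mult_pos_pos mu_integral_indicator_ball_pos)
  ultimately show "min 1 (\<delta> * mu_integral (indicator (ball v0 R))) \<le> Rcoef \<beta> h s x"
    and "Rcoef \<beta> h s x \<le> max 1 (\<Lambda> * mu_integral (\<lambda>_::real^'n. 1))"
    using pow_beta_between[OF \<beta>] unfolding Rcoef_def mu_integral_cmult by auto
qed

section \<open>The maximum principle at a contact point\<close>

lemma inner_gradient_eq_0_at_local_min:
  fixes f :: "'a::real_inner \<Rightarrow> real"
  assumes "(f has_derivative (\<lambda>w. g \<bullet> w)) (at x)" and "\<forall>\<^sub>F y in nhds x. f x \<le> f y"
  shows "g = 0"
proof -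
  have "\<forall>\<^sub>F y in at x. f x \<le> f y"
    using assms(2) by (simp add: eventually_at_filter eventually_mono)
  with assms(1) have "(\<lambda>w. g \<bullet> w) = (\<lambda>w. 0)"
    by (rule has_derivative_local_min)
  then have "g \<bullet> g = 0"
    by metis
  then show ?thesis
    by simp
qed

lemma has_real_derivative_nonpos_at_left_min:
  fixes f :: "real \<Rightarrow> real"
  assumes "(f has_real_derivative d) (at_left s)" and "\<forall>\<^sub>F r in at_left s. f s \<le> f r"
  shows "d \<le> 0"
proof (rule tendsto_upperbound)
  show "((\<lambda>r. (f r - f s) / (r - s)) \<longlongrightarrow> d) (at_left s)"
    using assms(1) by (simp add: has_field_derivative_iff)
  have "\<forall>\<^sub>F r in at_left s. r < s"
    by (simp add: eventually_at_filter)
  with assms(2) show "\<forall>\<^sub>F r in at_left s. (f r - f s) / (r - s) \<le> 0"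
    by eventually_elim (simp add: divide_nonneg_neg)
qed simp

text \<open>If \<open>c < 0\<close> then \<open>g < 0\<close> just right of 0, and the mean value theorem makes \<open>\<phi>\<close> decrease
  there.\<close>

lemma second_derivative_nonneg_at_local_min:
  fixes \<phi> g :: "real \<Rightarrow> real"
  assumes "0 < e" and der: "\<And>r. \<bar>r\<bar> < e \<Longrightarrow> (\<phi> has_real_derivative g r) (at r)"
    and "g 0 = 0" and dg: "(g has_real_derivative c) (at 0)"
    and min: "\<And>r. \<bar>r\<bar> < e \<Longrightarrow> \<phi> 0 \<le> \<phi> r"
  shows "0 \<le> c"
proof (rule ccontr)
  assume "\<not> 0 \<le> c"
  have "((\<lambda>y. g y / y) \<longlongrightarrow> c) (at_right 0)"
    using dg \<open>g 0 = 0\<close> by (simp add: has_field_derivative_iff filterlim_at_split)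
  then have "\<forall>\<^sub>F y in at_right 0. g y / y < 0"
    using \<open>\<not> 0 \<le> c\<close> by (intro order_tendstoD) auto
  moreover have "\<forall>\<^sub>F y in at_right 0. y \<in> {0<..<e}"
    using \<open>0 < e\<close> by (rule eventually_at_right_real)
  ultimately have "\<forall>\<^sub>F y in at_right 0. g y / y < 0 \<and> y \<in> {0<..<e}"
    by (rule eventually_conj)
  then obtain b where "0 < b"
    and neg: "\<And>y. 0 < y \<Longrightarrow> y < b \<Longrightarrow> g y < 0 \<and> y < e"
    unfolding eventually_at_right_field by (auto simp: divide_less_0_iff)
  define r where "r = b / 2"
  have r: "0 < r" "r < b" "r < e"
    using \<open>0 < b\<close> neg[of r] by (auto simp: r_def)
  obtain z where z: "0 < z" "z < r" "\<phi> r - \<phi> 0 = (r - 0) * g z"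
    using MVT2[OF r(1)] der r by force
  have "r * g z < 0"
    using neg[of z] z r by (simp add: mult_pos_neg)
  moreover have "\<phi> 0 \<le> \<phi> r"
    using min r by simp
  ultimately show False
    using z(3) by simp
qed

lemma gradient_field_eq_0_at_local_min:
  fixes f :: "'a::real_inner \<Rightarrow> real"
  assumes "\<forall>\<^sub>F u in nhds v. (f has_derivative (\<lambda>w. G u \<bullet> w)) (at u)"
    and "\<forall>\<^sub>F u in nhds v. f v \<le> f u"
  shows "G v = 0"
  using eventually_nhds_x_imp_x[OF assms(1)] assms(2) by (rule inner_gradient_eq_0_at_local_min)

lemma trace_hessian_nonneg_at_local_min:
  fixes f :: "real^'n \<Rightarrow> real" and G :: "real^'n \<Rightarrow> real^'n"
  assumes grad: "\<forall>\<^sub>F u in nhds v. (f has_derivative (\<lambda>w. G u \<bullet> w)) (at u)"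
    and hess: "(G has_derivative D) (at v)"
    and min: "\<forall>\<^sub>F u in nhds v. f v \<le> f u"
  shows "0 \<le> (\<Sum>i\<in>UNIV. D (axis i 1) $ i)"
proof (intro sum_nonneg)
  fix i
  from eventually_conj[OF grad min] obtain e where "0 < e"
    and near: "\<And>u. dist u v < e \<Longrightarrow> (f has_derivative (\<lambda>w. G u \<bullet> w)) (at u) \<and> f v \<le> f u"
    unfolding eventually_nhds_metric by (auto simp: dist_commute)
  define a :: "real^'n" where "a = axis i 1"
  have line: "((\<lambda>r. v + r *\<^sub>R a) has_derivative (\<lambda>r. r *\<^sub>R a)) (at r)" for r
    by (auto intro!: derivative_eq_intros)
  have close: "dist (v + r *\<^sub>R a) v < e" if "\<bar>r\<bar> < e" for r
    using that by (simp add: dist_norm a_def)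
  have "0 \<le> D a \<bullet> a"
  proof (rule second_derivative_nonneg_at_local_min[OF \<open>0 < e\<close>])
    show "((\<lambda>r. f (v + r *\<^sub>R a)) has_real_derivative G (v + r *\<^sub>R a) \<bullet> a) (at r)"
      if "\<bar>r\<bar> < e" for r
      using diff_chain_at[OF line near[OF close[OF that], THEN conjunct1]]
      by (simp add: o_def has_field_derivative_def mult_commute_abs)
    show "G (v + 0 *\<^sub>R a) \<bullet> a = 0"
      using gradient_field_eq_0_at_local_min[OF grad min] by simp
    have "(G has_derivative D) (at (v + 0 *\<^sub>R a))"
      using hess by simp
    from diff_chain_at[OF line this]
    have "((\<lambda>r. G (v + r *\<^sub>R a)) has_derivative (\<lambda>r. D (r *\<^sub>R a))) (at 0)"
      by (simp add: o_def)
    then show "((\<lambda>r. G (v + r *\<^sub>R a) \<bullet> a) has_real_derivative D a \<bullet> a) (at 0)"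
      using linear_scale[OF has_derivative_linear[OF hess]]
      by (auto simp: has_field_derivative_def intro!: derivative_eq_intros)
    show "f (v + 0 *\<^sub>R a) \<le> f (v + r *\<^sub>R a)" if "\<bar>r\<bar> < e" for r
      using near[OF close[OF that]] by simp
  qed
  then show "0 \<le> D (axis i 1) $ i"
    by (simp add: a_def inner_axis)
qed

lemma local_min_diff_gradient_trace:
  fixes f g :: "real^'n \<Rightarrow> real" and Gf Gg :: "real^'n \<Rightarrow> real^'n"
  assumes Gf: "\<forall>\<^sub>F u in nhds v. (f has_derivative (\<lambda>w. Gf u \<bullet> w)) (at u)"
    and Gg: "\<forall>\<^sub>F u in nhds v. (g has_derivative (\<lambda>w. Gg u \<bullet> w)) (at u)"
    and Df: "(Gf has_derivative Df) (at v)" and Dg: "(Gg has_derivative Dg) (at v)"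
    and min: "\<forall>\<^sub>F u in nhds v. f v - g v \<le> f u - g u"
  shows "Gf v = Gg v" and "(\<Sum>i\<in>UNIV. Dg (axis i 1) $ i) \<le> (\<Sum>i\<in>UNIV. Df (axis i 1) $ i)"
proof -
  have grad: "\<forall>\<^sub>F u in nhds v. ((\<lambda>u. f u - g u) has_derivative (\<lambda>w. (Gf u - Gg u) \<bullet> w)) (at u)"
    using Gf Gg by eventually_elim (use has_derivative_diff in \<open>force simp: inner_diff_left\<close>)
  have hess: "((\<lambda>u. Gf u - Gg u) has_derivative (\<lambda>w. Df w - Dg w)) (at v)"
    by (rule has_derivative_diff[OF Df Dg])
  show "Gf v = Gg v"
    using gradient_field_eq_0_at_local_min[OF grad min] by simp
  show "(\<Sum>i\<in>UNIV. Dg (axis i 1) $ i) \<le> (\<Sum>i\<in>UNIV. Df (axis i 1) $ i)"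
    using trace_hessian_nonneg_at_local_min[OF grad hess min] by (simp add: sum_subtractf)
qed

lemma Rcoef_nonneg: "0 \<le> Rcoef \<beta> h t x"
  by (simp add: Rcoef_def pow_beta_nonneg)

lemma classical_solution_contact_inequality:
  fixes h \<psi> :: "real \<Rightarrow> real^'n \<Rightarrow> real^'n \<Rightarrow> real"
  assumes sol: "classical_solution \<beta> T h" and s: "s \<in> {0<..T}"
    and \<psi>t: "((\<lambda>r. \<psi> r x v) has_real_derivative \<psi>t) (at s)"
    and \<psi>x: "((\<lambda>y. \<psi> s y v) has_derivative (\<lambda>w. \<psi>x \<bullet> w)) (at x)"
    and \<psi>v: "\<And>u. ((\<lambda>u. \<psi> s x u) has_derivative (\<lambda>w. \<psi>v u \<bullet> w)) (at u)"
    and \<psi>vv: "(\<psi>v has_derivative \<psi>vv) (at v)"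
    and min_t: "\<forall>\<^sub>F r in at_left s. h s x v - \<psi> s x v \<le> h r x v - \<psi> r x v"
    and min_x: "\<forall>\<^sub>F y in nhds x. h s x v - \<psi> s x v \<le> h s y v - \<psi> s y v"
    and min_v: "\<forall>\<^sub>F u in nhds v. h s x v - \<psi> s x v \<le> h s x u - \<psi> s x u"
  shows "Rcoef \<beta> h s x * ((\<Sum>i\<in>UNIV. \<psi>vv (axis i 1) $ i) - v \<bullet> \<psi>v v) \<le> \<psi>t + v \<bullet> \<psi>x"
proof -
  obtain ht gx G Dg where
    ht: "((\<lambda>r. h r x v) has_real_derivative ht) (at s within {0..T})"
    and gx: "((\<lambda>y. h s y v) has_derivative (\<lambda>w. gx \<bullet> w)) (at x)"
    and G: "\<forall>\<^sub>F u in nhds v. ((\<lambda>u. h s x u) has_derivative (\<lambda>w. G u \<bullet> w)) (at u)"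
    and Dg: "(G has_derivative Dg) (at v)"
    and eq: "ht + v \<bullet> gx = Rcoef \<beta> h s x * ((\<Sum>i\<in>UNIV. Dg (axis i 1) $ i) - v \<bullet> G v)"
    using sol s unfolding classical_solution_def by blast
  have "((\<lambda>r. h r x v - \<psi> r x v) has_real_derivative ht - \<psi>t) (at s within {0..s})"
    using s by (intro DERIV_diff DERIV_subset[OF ht] has_field_derivative_at_within[OF \<psi>t]) auto
  then have "ht - \<psi>t \<le> 0"
    using s by (intro has_real_derivative_nonpos_at_left_min[OF _ min_t]) (simp add: at_within_Icc_at_left)
  moreover have "gx - \<psi>x = 0"
    using has_derivative_diff[OF gx \<psi>x] min_x
    by (intro inner_gradient_eq_0_at_local_min) (simp_all add: inner_diff_left)
  moreover note local_min_diff_gradient_trace[OF G always_eventually[OF allI[OF \<psi>v]] Dg \<psi>vv min_v]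
  ultimately have trace: "(\<Sum>i\<in>UNIV. \<psi>vv (axis i 1) $ i) - v \<bullet> \<psi>v v \<le> (\<Sum>i\<in>UNIV. Dg (axis i 1) $ i) - v \<bullet> G v"
    and transport: "ht + v \<bullet> gx \<le> \<psi>t + v \<bullet> \<psi>x"
    by auto
  have "Rcoef \<beta> h s x * ((\<Sum>i\<in>UNIV. \<psi>vv (axis i 1) $ i) - v \<bullet> \<psi>v v)
      \<le> Rcoef \<beta> h s x * ((\<Sum>i\<in>UNIV. Dg (axis i 1) $ i) - v \<bullet> G v)"
    using trace Rcoef_nonneg by (rule mult_left_mono)
  then show ?thesis
    using eq transport by linarith
qed

section \<open>A Gaussian barrier along the free transport of \<open>(x0, v0)\<close>\<close>

lemma cross_term_le:
  fixes w y :: "'a::real_inner"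
  assumes "0 < \<rho>" "0 < \<sigma>" "0 < S" "\<rho> \<le> \<sigma> * S\<^sup>2"
    and "(norm w)\<^sup>2 / \<rho> \<le> M" "(norm y)\<^sup>2 / \<sigma> \<le> M"
  shows "- 2 * (w \<bullet> y) / \<sigma> \<le> 2 * M * S"
proof -
  have "0 \<le> M"
    using assms(1,5) by (smt (verit) divide_nonneg_pos zero_le_power2)
  have "- 2 * (w \<bullet> y) / \<sigma> \<le> 2 * norm w * norm y / \<sigma>"
    using Cauchy_Schwarz_ineq2[of w y] assms(2) by (intro divide_right_mono) auto
  also have "\<dots> \<le> (norm w)\<^sup>2 / \<rho> * S + (norm y)\<^sup>2 / \<sigma> * (\<rho> / (\<sigma> * S))"
  proof -
    have "0 \<le> (norm w * S * \<sigma> - norm y * \<rho>)\<^sup>2"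
      by simp
    then show ?thesis
      using assms(1-3) by (simp add: field_simps power2_eq_square)
  qed
  also have "\<dots> \<le> M * S + M * S"
  proof (intro add_mono mult_mono)
    show "\<rho> / (\<sigma> * S) \<le> S"
      using assms(2-4) by (simp add: divide_le_eq power2_eq_square mult_ac)
  qed (use assms \<open>0 \<le> M\<close> in auto)
  finally show ?thesis
    by simp
qed

lemma norm_sq_le_twice_inner_add: "- (norm a)\<^sup>2 \<le> 2 * ((a + b) \<bullet> b)"
  for a b :: "'a::real_inner"
proof -
  have "0 \<le> (norm (a + 2 *\<^sub>R b))\<^sup>2"
    by simp
  then have "0 \<le> a \<bullet> a + 4 * (a \<bullet> b) + 4 * (b \<bullet> b)"
    by (simp add: power2_norm_eq_inner inner_add_left inner_add_right inner_commute)
  then show ?thesis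
    using inner_ge_zero[of a] unfolding power2_norm_eq_inner inner_add_left distrib_left by linarith
qed

lemma has_real_derivative_norm_sq_line:
  fixes x c u :: "'a::real_inner"
  shows "((\<lambda>r. (norm (x - (c + r *\<^sub>R u)))\<^sup>2) has_real_derivative - 2 * ((x - (c + s *\<^sub>R u)) \<bullet> u)) (at s)"
  unfolding has_field_derivative_def power2_norm_eq_inner
  by (rule has_derivative_eq_rhs, (rule derivative_eq_intros refl)+)
     (auto simp: fun_eq_iff inner_commute algebra_simps)

text \<open>The velocity variance \<open>\<rho> s\<close> grows at the minimal diffusion rate \<open>a0\<close>; the assumptions
  of the locale are exactly the inequalities used by the comparison argument.\<close>

locale gaussian_barrier =
  fixes a0 a1 \<delta> K M0 R Rv S \<sigma> \<rho>0 s0 t :: real and x0 v0 :: "real^'n"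
  assumes a0_pos: "0 < a0" and a0_le_a1: "a0 \<le> a1" and \<delta>_pos: "0 < \<delta>" and M0_pos: "0 < M0"
    and R_pos: "0 < R" and Rv_pos: "0 < Rv" and S_pos: "0 < S" and \<sigma>_pos: "0 < \<sigma>"
    and \<rho>0_pos: "0 < \<rho>0"
    and final_spread_le: "\<rho>0 + 4 * a0 * (t - s0) \<le> \<sigma> * S\<^sup>2"
    and K_gt: "2 * M0 * S + a1 * (2 * real CARD('n) + (norm v0)\<^sup>2) / \<rho>0 < K"
    and M0_\<sigma>_le: "M0 * \<sigma> \<le> R\<^sup>2" and M0_\<rho>0_le: "M0 * \<rho>0 \<le> R\<^sup>2"
    and M0_final_spread_le: "M0 * (\<rho>0 + 4 * a0 * (t - s0)) \<le> Rv\<^sup>2"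
begin

definition \<rho> :: "real \<Rightarrow> real" where
  "\<rho> s = \<rho>0 + 4 * a0 * (s - s0)"

definition barrier :: "real \<Rightarrow> real^'n \<Rightarrow> real^'n \<Rightarrow> real" where
  "barrier s x v = \<delta> * exp (- K * (s - s0)) *
     exp (- ((norm (v - v0))\<^sup>2 / \<rho> s + (norm (x - (x0 + s *\<^sub>R v0)))\<^sup>2 / \<sigma>))"

definition barrier_dt :: "real \<Rightarrow> real^'n \<Rightarrow> real^'n \<Rightarrow> real" where
  "barrier_dt s x v = barrier s x v *
     (- K + 4 * a0 * (norm (v - v0))\<^sup>2 / (\<rho> s)\<^sup>2 + 2 * ((x - (x0 + s *\<^sub>R v0)) \<bullet> v0) / \<sigma>)"

definition barrier_grad_x :: "real \<Rightarrow> real^'n \<Rightarrow> real^'n \<Rightarrow> real^'n" where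
  "barrier_grad_x s x v = (- 2 * barrier s x v / \<sigma>) *\<^sub>R (x - (x0 + s *\<^sub>R v0))"

definition barrier_grad_v :: "real \<Rightarrow> real^'n \<Rightarrow> real^'n \<Rightarrow> real^'n" where
  "barrier_grad_v s x v = (- 2 * barrier s x v / \<rho> s) *\<^sub>R (v - v0)"

definition barrier_hess_v :: "real \<Rightarrow> real^'n \<Rightarrow> real^'n \<Rightarrow> real^'n \<Rightarrow> real^'n" where
  "barrier_hess_v s x v w =
     (- 2 * barrier s x v / \<rho> s) *\<^sub>R w + (- 2 * (barrier_grad_v s x v \<bullet> w) / \<rho> s) *\<^sub>R (v - v0)"

definition cylinder :: "(real \<times> (real^'n) \<times> (real^'n)) set" where
  "cylinder = {(s, x, v). s0 \<le> s \<and> s \<le> t \<and> norm (x - (x0 + s *\<^sub>R v0)) \<le> R \<and> norm (v - v0) \<le> Rv}"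

lemma \<rho>_pos: "s0 \<le> s \<Longrightarrow> 0 < \<rho> s"
  using \<rho>0_pos a0_pos by (simp add: \<rho>_def add_pos_nonneg)

lemma \<rho>_neq_0: "s0 \<le> s \<Longrightarrow> \<rho> s \<noteq> 0"
  using \<rho>_pos by force

lemma \<sigma>_neq_0: "\<sigma> \<noteq> 0"
  using \<sigma>_pos by simp

lemma \<rho>_le_final_spread: "s \<le> t \<Longrightarrow> \<rho> s \<le> \<rho>0 + 4 * a0 * (t - s0)"
  using a0_pos by (simp add: \<rho>_def)

lemma K_nonneg: "0 \<le> K"
  using K_gt M0_pos S_pos a0_pos a0_le_a1 \<rho>0_pos
  by (smt (verit) divide_nonneg_pos mult_nonneg_nonneg of_nat_0_le_iff zero_le_power2)

lemma barrier_pos: "0 < barrier s x v"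
  using \<delta>_pos by (simp add: barrier_def)

lemma barrier_le_\<delta>:
  assumes "s0 \<le> s"
  shows "barrier s x v \<le> \<delta>"
proof -
  have "0 \<le> (norm (v - v0))\<^sup>2 / \<rho> s + (norm (x - (x0 + s *\<^sub>R v0)))\<^sup>2 / \<sigma>"
    using \<rho>_pos[OF assms] \<sigma>_pos by simp
  then have "exp (- K * (s - s0)) \<le> 1" "exp (- ((norm (v - v0))\<^sup>2 / \<rho> s + (norm (x - (x0 + s *\<^sub>R v0)))\<^sup>2 / \<sigma>)) \<le> 1"
    using assms K_nonneg by auto
  then show ?thesis
    using \<delta>_pos by (simp add: barrier_def mult_le_one)
qed

lemma has_derivative_barrier_x:
  "((\<lambda>y. barrier s y v) has_derivative (\<lambda>w. barrier_grad_x s x v \<bullet> w)) (at x)"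
  unfolding barrier_grad_x_def barrier_def power2_norm_eq_inner
  by (rule has_derivative_eq_rhs, (rule derivative_eq_intros refl | simp add: \<sigma>_neq_0)+)
     (simp add: fun_eq_iff inner_commute algebra_simps)

lemma has_derivative_barrier_v:
  assumes "s0 \<le> s"
  shows "((\<lambda>u. barrier s x u) has_derivative (\<lambda>w. barrier_grad_v s x u \<bullet> w)) (at u)"
  unfolding barrier_grad_v_def barrier_def power2_norm_eq_inner
  by (rule has_derivative_eq_rhs, (rule derivative_eq_intros refl | simp add: \<rho>_neq_0[OF assms])+)
     (simp add: fun_eq_iff inner_commute algebra_simps)

lemma has_derivative_barrier_grad_v:
  assumes "s0 \<le> s"
  shows "(barrier_grad_v s x has_derivative barrier_hess_v s x v) (at v)"
  unfolding barrier_grad_v_def[abs_def] barrier_hess_v_def[abs_def]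
  by (rule has_derivative_eq_rhs,
      (rule derivative_eq_intros refl has_derivative_barrier_v[OF assms] | simp add: \<rho>_neq_0[OF assms])+)
     (simp add: fun_eq_iff barrier_grad_v_def)

lemma has_real_derivative_barrier_t:
  assumes "s0 \<le> s"
  shows "((\<lambda>r. barrier r x v) has_real_derivative barrier_dt s x v) (at s)"
  unfolding barrier_dt_def barrier_def \<rho>_def
  by ((rule has_real_derivative_norm_sq_line derivative_eq_intros refl
       | simp add: \<sigma>_neq_0 \<rho>_neq_0[OF assms, unfolded \<rho>_def])+,
      simp add: field_simps power2_eq_square)

lemma trace_barrier_hess_v:
  "(\<Sum>i\<in>UNIV. barrier_hess_v s x v (axis i 1) $ i)
     = barrier s x v * (- 2 * real CARD('n) / \<rho> s + 4 * (norm (v - v0))\<^sup>2 / (\<rho> s)\<^sup>2)"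
proof -
  define c where "c = - 2 * barrier s x v / \<rho> s"
  have "(\<Sum>i\<in>UNIV. barrier_hess_v s x v (axis i 1) $ i)
      = (\<Sum>i\<in>UNIV. c - 2 * c / \<rho> s * ((v - v0) $ i * (v - v0) $ i))"
    by (intro sum.cong) (auto simp: barrier_hess_v_def barrier_grad_v_def c_def inner_axis)
  also have "\<dots> = real CARD('n) * c - 2 * c / \<rho> s * (norm (v - v0))\<^sup>2"
    by (simp add: sum_subtractf sum_divide_distrib[symmetric] sum_distrib_left[symmetric] power2_norm_eq_inner inner_vec_def)
  finally show ?thesis
    by (simp add: c_def field_simps power2_eq_square)
qed

lemma barrier_large_imp_exponent_lt:
  assumes "s0 \<le> s" and "\<delta> * exp (- M0) < barrier s x v"
  shows "(norm (v - v0))\<^sup>2 / \<rho> s + (norm (x - (x0 + s *\<^sub>R v0)))\<^sup>2 / \<sigma> < M0"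
proof -
  let ?Q = "(norm (v - v0))\<^sup>2 / \<rho> s + (norm (x - (x0 + s *\<^sub>R v0)))\<^sup>2 / \<sigma>"
  have "exp (- K * (s - s0)) \<le> 1"
    using assms(1) K_nonneg by simp
  then have "barrier s x v \<le> \<delta> * exp (- ?Q)"
    using \<delta>_pos by (simp add: barrier_def mult_left_le)
  then have "\<delta> * exp (- M0) < \<delta> * exp (- ?Q)"
    using assms(2) by linarith
  then show ?thesis
    using \<delta>_pos by simp
qed

lemma barrier_large_imp_inside:
  assumes "s0 \<le> s" "s \<le> t" and large: "\<delta> * exp (- M0) < barrier s x v"
  shows "norm (x - (x0 + s *\<^sub>R v0)) < R" and "norm (v - v0) < Rv"
    and "s = s0 \<Longrightarrow> norm (v - v0) < R"
proof -
  have exponent: "(norm (v - v0))\<^sup>2 / \<rho> s + (norm (x - (x0 + s *\<^sub>R v0)))\<^sup>2 / \<sigma> < M0"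
    using barrier_large_imp_exponent_lt[OF assms(1) large] .
  moreover have "0 \<le> (norm (v - v0))\<^sup>2 / \<rho> s" "0 \<le> (norm (x - (x0 + s *\<^sub>R v0)))\<^sup>2 / \<sigma>"
    using \<rho>_pos[OF assms(1)] \<sigma>_pos by simp_all
  ultimately have "(norm (v - v0))\<^sup>2 / \<rho> s < M0" "(norm (x - (x0 + s *\<^sub>R v0)))\<^sup>2 / \<sigma> < M0"
    by linarith+
  then have v_part: "(norm (v - v0))\<^sup>2 < M0 * \<rho> s"
    and x_part: "(norm (x - (x0 + s *\<^sub>R v0)))\<^sup>2 < M0 * \<sigma>"
    using \<rho>_pos[OF assms(1)] \<sigma>_pos by (simp_all add: pos_divide_less_eq)
  show "norm (x - (x0 + s *\<^sub>R v0)) < R"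
    by (rule power2_less_imp_less) (use x_part M0_\<sigma>_le R_pos in auto)
  have "M0 * \<rho> s \<le> Rv\<^sup>2"
    using \<rho>_le_final_spread[OF assms(2)] M0_pos M0_final_spread_le
    by (meson mult_left_mono less_imp_le order_trans)
  with v_part show "norm (v - v0) < Rv"
    using Rv_pos by (metis power2_less_imp_less order_less_le_trans less_imp_le)
  show "norm (v - v0) < R" if "s = s0"
    by (rule power2_less_imp_less) (use v_part M0_\<rho>0_le R_pos that in \<open>auto simp: \<rho>_def\<close>)
qed

lemma barrier_transport_eq:
  "barrier_dt s x v + v \<bullet> barrier_grad_x s x v = barrier s x v *
    (- K + 4 * a0 * (norm (v - v0))\<^sup>2 / (\<rho> s)\<^sup>2 - 2 * ((v - v0) \<bullet> (x - (x0 + s *\<^sub>R v0))) / \<sigma>)"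
proof -
  have cross: "(v - v0) \<bullet> (x - (x0 + s *\<^sub>R v0)) = v \<bullet> (x - (x0 + s *\<^sub>R v0)) - (x - (x0 + s *\<^sub>R v0)) \<bullet> v0"
    by (simp add: inner_diff_left inner_commute[of _ v0])
  show ?thesis
    unfolding barrier_dt_def barrier_grad_x_def inner_scaleR_right cross
    using \<sigma>_neq_0 by (simp add: field_simps)
qed

lemma barrier_diffusion_eq:
  assumes "s0 \<le> s"
  shows "(\<Sum>i\<in>UNIV. barrier_hess_v s x v (axis i 1) $ i) - v \<bullet> barrier_grad_v s x v = barrier s x v *
    (- 2 * real CARD('n) / \<rho> s + 4 * (norm (v - v0))\<^sup>2 / (\<rho> s)\<^sup>2 + 2 * (v \<bullet> (v - v0)) / \<rho> s)"
  unfolding trace_barrier_hess_v barrier_grad_v_def inner_scaleR_right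
  using \<rho>_neq_0[OF assms] by (simp add: field_simps)

text \<open>The growth rate \<open>4 a0\<close> of \<open>\<rho>\<close> is paid for by the diffusion rate \<open>a \<ge> a0\<close>, while \<open>K\<close> dominates
  the mixed term \<open>(v - v0) \<cdot> (x - x0 - s v0)\<close> (this is where \<open>\<rho> \<le> \<sigma> S^2\<close> enters) and the
  dimension and drift terms of the diffusion.\<close>

lemma barrier_strict_subsolution:
  assumes s: "s0 \<le> s" "s \<le> t" and a: "a0 \<le> a" "a \<le> a1"
    and large: "\<delta> * exp (- M0) < barrier s x v"
  shows "barrier_dt s x v + v \<bullet> barrier_grad_x s x v
    < a * ((\<Sum>i\<in>UNIV. barrier_hess_v s x v (axis i 1) $ i) - v \<bullet> barrier_grad_v s x v)"
proof -
  define w where "w = v - v0"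
  define y where "y = x - (x0 + s *\<^sub>R v0)"
  define n where "n = real CARD('n)"
  define N where "N = (norm w)\<^sup>2"
  have \<rho>: "0 < \<rho> s" "\<rho>0 \<le> \<rho> s" "\<rho> s \<le> \<sigma> * S\<^sup>2"
    using \<rho>_pos[OF s(1)] s(1) a0_pos order_trans[OF \<rho>_le_final_spread[OF s(2)] final_spread_le]
    by (auto simp: \<rho>_def[of s])
  have "N / \<rho> s + (norm y)\<^sup>2 / \<sigma> < M0" "0 \<le> N / \<rho> s" "0 \<le> (norm y)\<^sup>2 / \<sigma>"
    using barrier_large_imp_exponent_lt[OF s(1) large] \<rho>(1) \<sigma>_pos by (simp_all add: N_def w_def y_def)
  then have "(norm w)\<^sup>2 / \<rho> s \<le> M0" "(norm y)\<^sup>2 / \<sigma> \<le> M0"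
    unfolding N_def by linarith+
  then have cross: "- 2 * (w \<bullet> y) / \<sigma> \<le> 2 * M0 * S"
    using \<rho> \<sigma>_pos S_pos by (intro cross_term_le[where \<rho> = "\<rho> s"])
  have drift: "- (norm v0)\<^sup>2 / \<rho> s \<le> 2 * (v \<bullet> w) / \<rho> s"
    using divide_right_mono[OF norm_sq_le_twice_inner_add[of v0 w] less_imp_le[OF \<rho>(1)]]
    by (simp add: w_def)
  have "- K + 4 * a0 * N / (\<rho> s)\<^sup>2 - 2 * (w \<bullet> y) / \<sigma>
      < 4 * a0 * N / (\<rho> s)\<^sup>2 - a1 * ((2 * n + (norm v0)\<^sup>2) / \<rho>0)"
    using cross K_gt by (simp add: n_def)
  also have "\<dots> \<le> a * (4 * N / (\<rho> s)\<^sup>2) - a * ((2 * n + (norm v0)\<^sup>2) / \<rho> s)"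
  proof (intro diff_mono)
    show "4 * a0 * N / (\<rho> s)\<^sup>2 \<le> a * (4 * N / (\<rho> s)\<^sup>2)"
      using mult_right_mono[OF a(1), of "4 * N / (\<rho> s)\<^sup>2"] by (simp add: N_def mult.assoc mult.left_commute)
    show "a * ((2 * n + (norm v0)\<^sup>2) / \<rho> s) \<le> a1 * ((2 * n + (norm v0)\<^sup>2) / \<rho>0)"
      using a a0_pos \<rho> \<rho>0_pos by (intro mult_mono divide_left_mono) (auto simp: n_def)
  qed
  also have "\<dots> \<le> a * (- 2 * n / \<rho> s + 4 * N / (\<rho> s)\<^sup>2 + 2 * (v \<bullet> w) / \<rho> s)"
    using mult_left_mono[OF drift, of a] a a0_pos
    by (simp add: algebra_simps add_divide_distrib diff_divide_distrib)
  finally show ?thesis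
    unfolding barrier_transport_eq barrier_diffusion_eq[OF s(1)]
    using barrier_pos[of s x v] by (simp add: N_def n_def w_def y_def mult.left_commute[of _ a])
qed

lemma compact_cylinder: "compact cylinder"
proof -
  have "cylinder = {p. s0 \<le> fst p} \<inter> {p. fst p \<le> t}
      \<inter> {p. norm (fst (snd p) - (x0 + fst p *\<^sub>R v0)) \<le> R} \<inter> {p. norm (snd (snd p) - v0) \<le> Rv}"
    by (auto simp: cylinder_def)
  also have "closed \<dots>"
    by (intro closed_Int closed_Collect_le continuous_intros)
  finally have "closed cylinder" .
  moreover have "cylinder \<subseteq> {s0..t} \<times> cball x0 (R + (\<bar>s0\<bar> + \<bar>t\<bar>) * norm v0) \<times> cball v0 Rv"
  proof
    fix p assume "p \<in> cylinder"
    then obtain s x v where p: "p = (s, x, v)" and s: "s0 \<le> s" "s \<le> t"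
      and x: "norm (x - (x0 + s *\<^sub>R v0)) \<le> R" and v: "norm (v - v0) \<le> Rv"
      by (cases p) (auto simp: cylinder_def)
    have "dist x0 x \<le> norm (x - (x0 + s *\<^sub>R v0)) + norm (s *\<^sub>R v0)"
      using norm_triangle_ineq[of "x - (x0 + s *\<^sub>R v0)" "s *\<^sub>R v0"]
      by (simp add: dist_norm norm_minus_commute algebra_simps)
    also have "norm (s *\<^sub>R v0) \<le> (\<bar>s0\<bar> + \<bar>t\<bar>) * norm v0"
      using s by (auto intro!: mult_right_mono)
    finally show "p \<in> {s0..t} \<times> cball x0 (R + (\<bar>s0\<bar> + \<bar>t\<bar>) * norm v0) \<times> cball v0 Rv"
      using p s x v by (simp add: dist_norm norm_minus_commute)
  qed
  then have "bounded cylinder"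
    by (rule bounded_subset[rotated]) (intro bounded_Times bounded_cball bounded_closed_interval)
  ultimately show ?thesis
    by (simp add: compact_eq_bounded_closed)
qed

lemma continuous_on_barrier: "continuous_on cylinder (\<lambda>(s, x, v). barrier s x v)"
  unfolding barrier_def \<rho>_def case_prod_unfold
  by (intro continuous_intros) (auto simp: cylinder_def \<sigma>_neq_0 \<rho>_neq_0[unfolded \<rho>_def])

lemma eventually_in_cylinder:
  assumes "s0 < s" "s \<le> t" and x: "norm (x - (x0 + s *\<^sub>R v0)) < R" and v: "norm (v - v0) < Rv"
  shows "\<forall>\<^sub>F r in at_left s. (r, x, v) \<in> cylinder"
    and "\<forall>\<^sub>F y in nhds x. (s, y, v) \<in> cylinder"
    and "\<forall>\<^sub>F u in nhds v. (s, x, u) \<in> cylinder"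
proof -
  have "((\<lambda>r. norm (x - (x0 + r *\<^sub>R v0))) \<longlongrightarrow> norm (x - (x0 + s *\<^sub>R v0))) (at_left s)"
    by (intro tendsto_intros)
  then have "\<forall>\<^sub>F r in at_left s. norm (x - (x0 + r *\<^sub>R v0)) < R"
    using x by (rule order_tendstoD)
  moreover have "\<forall>\<^sub>F r in at_left s. r \<in> {s0<..<s}"
    using assms(1) by (rule eventually_at_left_real)
  ultimately show "\<forall>\<^sub>F r in at_left s. (r, x, v) \<in> cylinder"
    by eventually_elim (use assms v in \<open>auto simp: cylinder_def\<close>)
  have "\<forall>\<^sub>F y in nhds x. y \<in> ball (x0 + s *\<^sub>R v0) R"
    using x by (intro eventually_nhds_in_open) (auto simp: dist_norm norm_minus_commute)
  then show "\<forall>\<^sub>F y in nhds x. (s, y, v) \<in> cylinder"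
    by eventually_elim (use assms v in \<open>auto simp: cylinder_def dist_norm norm_minus_commute\<close>)
  have "\<forall>\<^sub>F u in nhds v. u \<in> ball v0 Rv"
    using v by (intro eventually_nhds_in_open) (auto simp: dist_norm norm_minus_commute)
  then show "\<forall>\<^sub>F u in nhds v. (s, x, u) \<in> cylinder"
    by eventually_elim (use assms x in \<open>auto simp: cylinder_def dist_norm norm_minus_commute\<close>)
qed

lemma barrier_no_late_contact:
  fixes h :: "real \<Rightarrow> real^'n \<Rightarrow> real^'n \<Rightarrow> real"
  assumes sol: "classical_solution \<beta> T h" and "0 \<le> s0" "t \<le> T" and s: "s0 < s" "s \<le> t"
    and coef: "a0 \<le> Rcoef \<beta> h s x" "Rcoef \<beta> h s x \<le> a1"
    and large: "\<delta> * exp (- M0) < barrier s x v"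
    and min: "\<And>r y u. (r, y, u) \<in> cylinder \<Longrightarrow> h s x v - barrier s x v \<le> h r y u - barrier r y u"
  shows False
proof -
  note inside = barrier_large_imp_inside[OF less_imp_le[OF s(1)] s(2) large]
  note near = eventually_in_cylinder[OF s inside(1,2)]
  have "Rcoef \<beta> h s x * ((\<Sum>i\<in>UNIV. barrier_hess_v s x v (axis i 1) $ i) - v \<bullet> barrier_grad_v s x v)
      \<le> barrier_dt s x v + v \<bullet> barrier_grad_x s x v"
  proof (rule classical_solution_contact_inequality[OF sol])
    show "s \<in> {0<..T}"
      using assms(2,3) s by auto
    show "((\<lambda>r. barrier r x v) has_real_derivative barrier_dt s x v) (at s)"
      using s by (intro has_real_derivative_barrier_t) simp
    show "((\<lambda>u. barrier s x u) has_derivative (\<lambda>w. barrier_grad_v s x u \<bullet> w)) (at u)" for u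
      using s by (intro has_derivative_barrier_v) simp
    show "(barrier_grad_v s x has_derivative barrier_hess_v s x v) (at v)"
      using s by (intro has_derivative_barrier_grad_v) simp
    show "\<forall>\<^sub>F r in at_left s. h s x v - barrier s x v \<le> h r x v - barrier r x v"
      using near(1) by eventually_elim (rule min)
    show "\<forall>\<^sub>F y in nhds x. h s x v - barrier s x v \<le> h s y v - barrier s y v"
      using near(2) by eventually_elim (rule min)
    show "\<forall>\<^sub>F u in nhds v. h s x v - barrier s x v \<le> h s x u - barrier s x u"
      using near(3) by eventually_elim (rule min)
  qed (rule has_derivative_barrier_x)
  moreover have "barrier_dt s x v + v \<bullet> barrier_grad_x s x v
      < Rcoef \<beta> h s x * ((\<Sum>i\<in>UNIV. barrier_hess_v s x v (axis i 1) $ i) - v \<bullet> barrier_grad_v s x v)"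
    using s coef large by (intro barrier_strict_subsolution) auto
  ultimately show False
    by linarith
qed

text \<open>The comparison function \<open>barrier - \<delta> e^(-M0)\<close> is below \<open>\<delta> \<le> h\<close> at time \<open>s0\<close> and negative near
  the lateral boundary of the cylinder, so a negative minimum of the difference to \<open>h\<close> is a
  contact point at a later time, which the strict subsolution property excludes.\<close>

lemma barrier_below_solution:
  fixes h :: "real \<Rightarrow> real^'n \<Rightarrow> real^'n \<Rightarrow> real"
  assumes sol: "classical_solution \<beta> T h" and "0 \<le> s0" "t \<le> T"
    and initial: "\<And>x v. norm (x - (x0 + s0 *\<^sub>R v0)) < R \<Longrightarrow> norm (v - v0) < R \<Longrightarrow> \<delta> \<le> h s0 x v"
    and coef: "\<And>s x. s \<in> {s0<..t} \<Longrightarrow> norm (x - (x0 + s *\<^sub>R v0)) < R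
      \<Longrightarrow> a0 \<le> Rcoef \<beta> h s x \<and> Rcoef \<beta> h s x \<le> a1"
    and "(s, x, v) \<in> cylinder"
  shows "barrier s x v - \<delta> * exp (- M0) \<le> h s x v"
proof (rule ccontr)
  assume contra: "\<not> ?thesis"
  have sub: "cylinder \<subseteq> {0..T} \<times> UNIV \<times> UNIV"
    using assms(2,3) by (auto simp: cylinder_def)
  then have "continuous_on cylinder (\<lambda>(s, x, v). h s x v)"
    using sol continuous_on_subset unfolding classical_solution_def by blast
  then have "continuous_on cylinder (\<lambda>p. (\<lambda>(s, x, v). h s x v) p - (\<lambda>(s, x, v). barrier s x v) p)"
    using continuous_on_barrier by (rule continuous_on_diff)
  then obtain s1 x1 v1 where p: "(s1, x1, v1) \<in> cylinder"
    and min: "\<And>r y u. (r, y, u) \<in> cylinder \<Longrightarrow> h s1 x1 v1 - barrier s1 x1 v1 \<le> h r y u - barrier r y u"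
    using continuous_attains_inf[OF compact_cylinder _] assms(6) by fastforce
  have s1: "s0 \<le> s1" "s1 \<le> t"
    using p by (auto simp: cylinder_def)
  have below: "h s1 x1 v1 - barrier s1 x1 v1 < - (\<delta> * exp (- M0))"
    using min[OF assms(6)] contra by linarith
  moreover have "0 \<le> h s1 x1 v1"
    using sol p sub by (auto simp: classical_solution_def)
  ultimately have large: "\<delta> * exp (- M0) < barrier s1 x1 v1"
    by linarith
  show False
  proof (cases "s1 = s0")
    case True
    then have "\<delta> \<le> h s1 x1 v1"
      using initial barrier_large_imp_inside[OF s1 large] by simp
    moreover have "0 < \<delta> * exp (- M0)"
      using \<delta>_pos by simp
    ultimately show False
      using below barrier_le_\<delta>[OF s1(1), of x1 v1] by linarith
  next
    case False
    with s1 have "s0 < s1"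
      by simp
    moreover have "a0 \<le> Rcoef \<beta> h s1 x1 \<and> Rcoef \<beta> h s1 x1 \<le> a1"
      using coef barrier_large_imp_inside(1)[OF s1 large] \<open>s0 < s1\<close> s1 by simp
    ultimately show False
      using barrier_no_late_contact[OF sol assms(2,3) _ s1(2) _ _ large min] by blast
  qed
qed

end

text \<open>With \<open>\<kappa> = 2 / (a0 c1)\<close> one has \<open>4 a0 (c1 / V) M0 = 8 V^2\<close>: at the final time the velocity
  variance has spread over \<open>|v - v0| \<le> V\<close> at the cost \<open>M0\<close>.\<close>

lemma gaussian_barrier_choice:
  fixes v0 :: "real^'n"
  assumes "0 < a0" "a0 \<le> a1" "0 < \<delta>" "0 < R" "0 < c1" "1 \<le> V"
    and \<kappa>: "\<kappa> = 2 / (a0 * c1)" "16 \<le> \<kappa>"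
    and M0_def: "M0 = \<kappa> * V ^ 3" and S_def: "S = (2 + 4 / R) * V"
    and \<sigma>_def: "\<sigma> = R\<^sup>2 / (2 * M0)" and \<rho>0_def: "\<rho>0 = R\<^sup>2 / M0"
    and K_def: "K = 2 * M0 * S + a1 * (2 * real CARD('n) + (norm v0)\<^sup>2) / \<rho>0 + 1"
  shows "gaussian_barrier a0 a1 \<delta> K M0 R (R + 3 * V) S \<sigma> \<rho>0 (t - c1 / V) t v0"
proof -
  have "0 < M0"
    unfolding M0_def using \<kappa>(2) \<open>1 \<le> V\<close> by (intro mult_pos_pos) auto
  have Rv: "R\<^sup>2 + 8 * V\<^sup>2 \<le> (R + 3 * V)\<^sup>2"
    using \<open>0 < R\<close> \<open>1 \<le> V\<close> by (simp add: algebra_simps power2_eq_square)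
  have "1 \<le> V\<^sup>2"
    using \<open>1 \<le> V\<close> by (simp add: one_le_power)
  then have "R\<^sup>2 \<le> R\<^sup>2 * V\<^sup>2"
    by (simp add: mult_le_cancel_left1)
  moreover have "0 \<le> R * V\<^sup>2"
    using \<open>0 < R\<close> by simp
  ultimately have "R\<^sup>2 + 8 * V\<^sup>2 \<le> 2 * (R\<^sup>2 * V\<^sup>2) + 8 * (R * V\<^sup>2) + 8 * V\<^sup>2"
    using zero_le_power2[of R] by linarith
  then have spread: "R\<^sup>2 + 8 * V\<^sup>2 \<le> (2 * R\<^sup>2 + 8 * R + 8) * V\<^sup>2"
    by (simp add: algebra_simps)
  have final_spread: "M0 * (\<rho>0 + 4 * a0 * (t - (t - c1 / V))) = R\<^sup>2 + 8 * V\<^sup>2"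
    using \<open>0 < M0\<close> assms(1,5,6)
    by (simp add: \<rho>0_def M0_def \<kappa>(1) field_simps power2_eq_square power3_eq_cube)
  show ?thesis
  proof unfold_locales
    show "0 < M0"
      by fact
    show "0 < S" "0 < \<sigma>" "0 < \<rho>0"
      using \<open>0 < M0\<close> assms(4,6) by (simp_all add: S_def \<sigma>_def \<rho>0_def add_pos_pos)
    show "M0 * \<sigma> \<le> R\<^sup>2" "M0 * \<rho>0 \<le> R\<^sup>2"
      using \<open>0 < M0\<close> by (simp_all add: \<sigma>_def \<rho>0_def)
    show "M0 * (\<rho>0 + 4 * a0 * (t - (t - c1 / V))) \<le> (R + 3 * V)\<^sup>2"
      using final_spread Rv by simp
    have product: "M0 * (\<sigma> * S\<^sup>2) = (2 * R\<^sup>2 + 8 * R + 8) * V\<^sup>2"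
      using \<open>0 < M0\<close> assms(4) by (simp add: \<sigma>_def S_def field_simps power2_eq_square)
    show "\<rho>0 + 4 * a0 * (t - (t - c1 / V)) \<le> \<sigma> * S\<^sup>2"
      by (rule mult_le_cancel_left_pos[OF \<open>0 < M0\<close>, THEN iffD1]) (use final_spread spread product in linarith)
  qed (use assms in \<open>auto simp: K_def\<close>)
qed

lemma barrier_exponent_at_target:
  fixes a0 a1 c1 \<kappa> R V N Y c :: real
  assumes "0 < a0" "0 < R" "0 < c1" "c1 \<le> 1" "(2 + 4 / R) * c1 \<le> 1 / 16"
    and "0 \<le> a1 * c" "a1 * c * c1 \<le> R\<^sup>2 / 16"
    and \<kappa>: "\<kappa> = 2 / (a0 * c1)" "16 \<le> \<kappa>" and "1 \<le> V"
    and N: "N \<le> V\<^sup>2" and Y: "Y < (R / 2)\<^sup>2"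
    and M0_def: "M0 = \<kappa> * V ^ 3" and S_def: "S = (2 + 4 / R) * V"
    and \<sigma>_def: "\<sigma> = R\<^sup>2 / (2 * M0)" and \<rho>0_def: "\<rho>0 = R\<^sup>2 / M0"
    and K_def: "K = 2 * M0 * S + a1 * c / \<rho>0 + 1"
  shows "K * (c1 / V) + N / (\<rho>0 + 4 * a0 * (c1 / V)) + Y / \<sigma> \<le> M0 - 1"
proof -
  have "0 < V"
    using \<open>1 \<le> V\<close> by simp
  have "16 \<le> M0"
    using \<kappa>(2) \<open>1 \<le> V\<close> mult_mono[of 16 \<kappa> 1 "V ^ 3"] by (simp add: M0_def one_le_power)
  have \<tau>M0: "c1 / V * M0 = 2 * V\<^sup>2 / a0"
    using \<open>0 < V\<close> assms(1,3) by (simp add: M0_def \<kappa>(1) field_simps power2_eq_square power3_eq_cube)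
  have "K * (c1 / V) = 2 * M0 * ((2 + 4 / R) * c1) + a1 * c * (c1 / V) * M0 / R\<^sup>2 + c1 / V"
    using \<open>16 \<le> M0\<close> \<open>0 < V\<close> by (simp add: K_def S_def \<rho>0_def field_simps)
  also have "\<dots> \<le> 2 * M0 * (1 / 16) + M0 / 16 + 1"
  proof (intro add_mono)
    show "2 * M0 * ((2 + 4 / R) * c1) \<le> 2 * M0 * (1 / 16)"
      using \<open>16 \<le> M0\<close> assms(5) by (intro mult_left_mono) auto
    have "a1 * c * (c1 / V) \<le> a1 * c * c1"
      using assms(3,6) \<open>1 \<le> V\<close> by (intro mult_left_mono) (auto simp: divide_le_eq)
    then have "a1 * c * (c1 / V) \<le> R\<^sup>2 / 16"
      using assms(7) by linarith
    then have "a1 * c * (c1 / V) * M0 \<le> R\<^sup>2 / 16 * M0"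
      using \<open>16 \<le> M0\<close> by (intro mult_right_mono) auto
    then have "a1 * c * (c1 / V) * M0 / R\<^sup>2 \<le> R\<^sup>2 / 16 * M0 / R\<^sup>2"
      by (rule divide_right_mono) simp
    then show "a1 * c * (c1 / V) * M0 / R\<^sup>2 \<le> M0 / 16"
      using assms(2) by simp
    show "c1 / V \<le> 1"
      using assms(3,4) \<open>1 \<le> V\<close> by (simp add: divide_le_eq)
  qed
  finally have K_part: "K * (c1 / V) \<le> 3 * M0 / 16 + 1"
    by simp
  have "N / (\<rho>0 + 4 * a0 * (c1 / V)) \<le> V\<^sup>2 / (4 * a0 * (c1 / V))"
    using N \<open>16 \<le> M0\<close> assms(1-3) \<open>0 < V\<close>
    by (intro frac_le) (auto simp: \<rho>0_def)
  also have "\<dots> = M0 / 8"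
    using \<tau>M0 assms(1,3) \<open>0 < V\<close> \<open>16 \<le> M0\<close> by (simp add: field_simps)
  finally have N_part: "N / (\<rho>0 + 4 * a0 * (c1 / V)) \<le> M0 / 8" .
  have "Y / \<sigma> < (R / 2)\<^sup>2 / \<sigma>"
    using Y \<open>16 \<le> M0\<close> assms(2) by (intro divide_strict_right_mono) (auto simp: \<sigma>_def)
  also have "\<dots> = M0 / 2"
    using \<open>16 \<le> M0\<close> assms(2) by (simp add: \<sigma>_def field_simps power2_eq_square)
  finally have Y_part: "Y / \<sigma> < M0 / 2" .
  show ?thesis
    using K_part N_part Y_part \<open>16 \<le> M0\<close> by linarith
qed

lemma solution_lower_bound_near_trajectory:
  fixes h :: "real \<Rightarrow> real^'n \<Rightarrow> real^'n \<Rightarrow> real" and x0 v0 x v :: "real^'n"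
  assumes sol: "classical_solution \<beta> T h"
    and lower: "\<And>s y u. s \<in> {0..T} \<Longrightarrow> norm (y - (x0 + s *\<^sub>R v0)) < R \<Longrightarrow> norm (u - v0) < R
      \<Longrightarrow> \<delta> \<le> h s y u"
    and coef: "\<And>s y. s \<in> {0<..T} \<Longrightarrow> norm (y - (x0 + s *\<^sub>R v0)) < R
      \<Longrightarrow> a0 \<le> Rcoef \<beta> h s y \<and> Rcoef \<beta> h s y \<le> a1"
    and params: "0 < a0" "a0 \<le> a1" "0 < \<delta>" "0 < R" "0 < c1" "c1 \<le> 1" "(2 + 4 / R) * c1 \<le> 1 / 16"
      "a1 * (2 * real CARD('n) + (norm v0)\<^sup>2) * c1 \<le> R\<^sup>2 / 16"
    and \<kappa>: "\<kappa> = 2 / (a0 * c1)" "16 \<le> \<kappa>"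
    and t: "c1 \<le> t" "t \<le> T" and x: "norm (x - (x0 + t *\<^sub>R v0)) < R / 2"
  shows "\<delta> * exp (- (\<kappa> * (norm v + norm v0 + 1) ^ 3)) \<le> h t x v"
proof -
  define V where "V = norm v + norm v0 + 1"
  define M0 where "M0 = \<kappa> * V ^ 3"
  define S where "S = (2 + 4 / R) * V"
  define \<sigma> where "\<sigma> = R\<^sup>2 / (2 * M0)"
  define \<rho>0 where "\<rho>0 = R\<^sup>2 / M0"
  define K where "K = 2 * M0 * S + a1 * (2 * real CARD('n) + (norm v0)\<^sup>2) / \<rho>0 + 1"
  have "1 \<le> V"
    by (simp add: V_def)
  then have \<tau>: "0 \<le> c1 / V" "c1 / V \<le> c1"
    using params(5) by (simp_all add: divide_le_eq)
  interpret gaussian_barrier a0 a1 \<delta> K M0 R "R + 3 * V" S \<sigma> \<rho>0 "t - c1 / V" t x0 v0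
    by (rule gaussian_barrier_choice[OF params(1-5) \<open>1 \<le> V\<close> \<kappa> M0_def S_def \<sigma>_def \<rho>0_def K_def])
  have "norm (v - v0) \<le> V"
    using norm_triangle_ineq4[of v v0] by (simp add: V_def)
  then have "K * (c1 / V) + (norm (v - v0))\<^sup>2 / \<rho> t + (norm (x - (x0 + t *\<^sub>R v0)))\<^sup>2 / \<sigma> \<le> M0 - 1"
    using barrier_exponent_at_target[OF params(1,4,5,6,7) _ params(8) \<kappa> \<open>1 \<le> V\<close> _ _
        M0_def S_def \<sigma>_def \<rho>0_def K_def] params x
    by (simp add: \<rho>_def power_mono power_strict_mono)
  then have "\<delta> * exp (- (M0 - 1)) \<le> barrier t x v"
    using params(3) by (simp add: barrier_def mult.assoc exp_add[symmetric])
  moreover have "barrier t x v - \<delta> * exp (- M0) \<le> h t x v"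
  proof (rule barrier_below_solution[OF sol])
    show "0 \<le> t - c1 / V" "t \<le> T"
      using \<tau> t by linarith+
    show "\<delta> \<le> h (t - c1 / V) y u"
      if "norm (y - (x0 + (t - c1 / V) *\<^sub>R v0)) < R" "norm (u - v0) < R" for y u
      by (rule lower[OF _ that]) (use \<tau> t in auto)
    show "a0 \<le> Rcoef \<beta> h s y \<and> Rcoef \<beta> h s y \<le> a1"
      if "s \<in> {t - c1 / V<..t}" "norm (y - (x0 + s *\<^sub>R v0)) < R" for s y
      by (rule coef[OF _ that(2)]) (use that(1) \<tau> t in auto)
    show "(t, x, v) \<in> cylinder"
      using x \<open>norm (v - v0) \<le> V\<close> params(4,5) \<open>1 \<le> V\<close> by (auto simp: cylinder_def)
  qed
  moreover have "\<delta> * exp (- M0) * 2 \<le> \<delta> * exp (- M0) * exp 1"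
    using params(3) exp_ge_add_one_self[of 1] by (intro mult_left_mono) auto
  ultimately show ?thesis
    by (simp add: M0_def V_def exp_diff exp_minus field_simps)
qed

lemma norm_diff_in_torus_dist_set: "norm (x - y) \<in> {norm (x - y - z) | z. int_vec z}"
  by (rule CollectI, rule exI[of _ 0]) (simp add: int_vec_def)

lemma torus_dist_le_norm: "torus_dist x y \<le> norm (x - y)"
  unfolding torus_dist_def
  by (rule cInf_lower[OF norm_diff_in_torus_dist_set]) (auto intro: bdd_belowI[of _ 0])

lemma torus_dist_less_imp_lattice_point:
  assumes "torus_dist x y < r"
  obtains z where "int_vec z" and "norm (x - y - z) < r"
proof -
  have "{norm (x - y - z) | z. int_vec z} \<noteq> {}"
    using norm_diff_in_torus_dist_set by blast
  from cInf_lessD[OF this assms[unfolded torus_dist_def]] show ?thesis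
    using that by blast
qed

lemma classical_solution_lift_near:
  fixes h :: "real \<Rightarrow> real^'n \<Rightarrow> real^'n \<Rightarrow> real"
  assumes "classical_solution \<beta> T h" and "torus_dist x y < r"
  obtains x' where "norm (x' - y) < r" and "\<And>s u. h s x u = h s x' u"
proof -
  obtain z where z: "int_vec z" "norm (x - y - z) < r"
    using torus_dist_less_imp_lattice_point[OF assms(2)] .
  have "h t (x - z + z) v = h t (x - z) v" for t v
    using assms(1) z(1) by (simp only: classical_solution_def)
  then show ?thesis
    using z(2) that[of "x - z"] by (simp add: algebra_simps)
qed

lemma exists_time_scale:
  fixes a0 c R Tlow :: real
  assumes "0 < a0" "0 \<le> c" "0 < R" "0 < Tlow"
  obtains c1 where "0 < c1" "c1 \<le> Tlow" "c1 \<le> 1" "(2 + 4 / R) * c1 \<le> 1 / 16"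
    "c * c1 \<le> R\<^sup>2 / 16" "16 \<le> 2 / (a0 * c1)"
proof
  define c1 where "c1 = Min {Tlow, 1, 1 / (16 * (2 + 4 / R)), R\<^sup>2 / (16 * (c + 1)), 1 / (8 * a0)}"
  have "0 < 2 + 4 / R"
    using assms(3) by (simp add: add_pos_nonneg)
  then show "0 < c1"
    using assms by (simp add: c1_def)
  have le: "c1 \<le> Tlow" "c1 \<le> 1" "c1 \<le> 1 / (16 * (2 + 4 / R))" "c1 \<le> R\<^sup>2 / (16 * (c + 1))"
    "c1 \<le> 1 / (8 * a0)"
    by (simp_all add: c1_def)
  then show "c1 \<le> Tlow" "c1 \<le> 1"
    by simp_all
  show "(2 + 4 / R) * c1 \<le> 1 / 16"
    using le(3) \<open>0 < 2 + 4 / R\<close> by (simp add: le_divide_eq algebra_simps)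
  have "c * c1 \<le> (c + 1) * (R\<^sup>2 / (16 * (c + 1)))"
    using le(4) assms(2) \<open>0 < c1\<close> by (intro mult_mono) auto
  also have "\<dots> = R\<^sup>2 / 16"
    using assms(2) by (simp add: field_simps add_nonneg_eq_0_iff)
  finally show "c * c1 \<le> R\<^sup>2 / 16" .
  show "16 \<le> 2 / (a0 * c1)"
    using le(5) assms(1) \<open>0 < c1\<close> by (simp add: le_divide_eq field_simps)
qed

lemma pow4_sum_le: "(a + b) ^ 4 \<le> 8 * (a ^ 4 + b ^ 4)"
  for a b :: real
proof -
  have "(a + b) ^ 4 = ((a + b)\<^sup>2)\<^sup>2"
    by algebra
  also have "\<dots> \<le> (2 * (a\<^sup>2 + b\<^sup>2))\<^sup>2"
  proof (rule power_mono)
    show "(a + b)\<^sup>2 \<le> 2 * (a\<^sup>2 + b\<^sup>2)"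
      using zero_le_power2[of "a - b"] by (simp add: power2_eq_square algebra_simps)
  qed simp
  also have "\<dots> = 4 * (a\<^sup>2 + b\<^sup>2)\<^sup>2"
    by algebra
  also have "\<dots> \<le> 8 * (a ^ 4 + b ^ 4)"
    using zero_le_power2[of "a\<^sup>2 - b\<^sup>2"] by (simp add: power2_eq_square power4_eq_xxxx algebra_simps)
  finally show ?thesis .
qed

lemma exists_quartic_gaussian_minorant:
  fixes \<kappa> \<delta> b :: real
  assumes "0 \<le> \<kappa>" "0 < \<delta>" "0 \<le> b"
  obtains C where "0 < C" and "\<And>r. 0 \<le> r \<Longrightarrow> exp (- C * r ^ 4) / C \<le> \<delta> * exp (- (\<kappa> * (r + b + 1) ^ 3))"
proof
  define C where "C = max (8 * \<kappa>) (exp (8 * \<kappa> * (b + 1) ^ 4) / \<delta>)"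
  show "0 < C"
    using assms(2) by (simp add: C_def less_max_iff_disj)
  fix r :: real
  assume "0 \<le> r"
  have "(r + b + 1) ^ 3 \<le> (r + b + 1) ^ 4"
    using \<open>0 \<le> r\<close> assms(3) by (intro power_increasing) auto
  also have "\<dots> \<le> 8 * (r ^ 4 + (b + 1) ^ 4)"
    using pow4_sum_le[of r "b + 1"] by (simp add: add.assoc)
  finally have "\<kappa> * (r + b + 1) ^ 3 \<le> 8 * \<kappa> * r ^ 4 + 8 * \<kappa> * (b + 1) ^ 4"
    using mult_left_mono[OF _ assms(1)] by (fastforce simp: algebra_simps)
  moreover have "8 * \<kappa> * r ^ 4 \<le> C * r ^ 4"
    using \<open>0 \<le> r\<close> by (intro mult_right_mono) (auto simp: C_def)
  ultimately have "- (C * r ^ 4) - 8 * \<kappa> * (b + 1) ^ 4 \<le> - (\<kappa> * (r + b + 1) ^ 3)"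
    by linarith
  then have decay: "exp (- (C * r ^ 4)) * exp (- (8 * \<kappa> * (b + 1) ^ 4)) \<le> exp (- (\<kappa> * (r + b + 1) ^ 3))"
    by (simp add: exp_add[symmetric])
  have "exp (8 * \<kappa> * (b + 1) ^ 4) \<le> C * \<delta>"
    using assms(2) by (simp add: C_def pos_divide_le_eq[symmetric])
  then have "1 / C \<le> \<delta> * exp (- (8 * \<kappa> * (b + 1) ^ 4))"
    using assms(2) \<open>0 < C\<close> by (simp add: exp_minus field_simps)
  then have "exp (- C * r ^ 4) / C \<le> \<delta> * (exp (- (C * r ^ 4)) * exp (- (8 * \<kappa> * (b + 1) ^ 4)))"
    by (simp add: mult_left_mono mult.left_commute divide_inverse flip: inverse_eq_divide)
  also have "\<dots> \<le> \<delta> * exp (- (\<kappa> * (r + b + 1) ^ 3))"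
    using decay assms(2) by simp
  finally show "exp (- C * r ^ 4) / C \<le> \<delta> * exp (- (\<kappa> * (r + b + 1) ^ 3))" .
qed

lemma solution_lower_bound_on_torus:
  fixes h :: "real \<Rightarrow> real^'n \<Rightarrow> real^'n \<Rightarrow> real" and x0 v0 x v :: "real^'n"
  assumes sol: "classical_solution \<beta> T h" and "0 \<le> \<beta>" "\<beta> \<le> 1" "0 < \<delta>" "0 < R"
    and upper: "\<forall>t\<in>{0..T}. \<forall>x v. h t x v \<le> \<Lambda>"
    and lower: "\<forall>t\<in>{0..T}. \<forall>x v. torus_dist x (x0 + t *\<^sub>R v0) < R \<and> norm (v - v0) < R \<longrightarrow> \<delta> \<le> h t x v"
    and a0_def: "a0 = min 1 (\<delta> * mu_integral (indicator (ball v0 R)))"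
    and a1_def: "a1 = max 1 (\<Lambda> * mu_integral (\<lambda>_::real^'n. 1))"
    and c1: "0 < c1" "c1 \<le> 1" "(2 + 4 / R) * c1 \<le> 1 / 16"
      "a1 * (2 * real CARD('n) + (norm v0)\<^sup>2) * c1 \<le> R\<^sup>2 / 16"
    and \<kappa>: "\<kappa> = 2 / (a0 * c1)" "16 \<le> \<kappa>"
    and t: "c1 \<le> t" "t \<le> T" and x: "torus_dist x (x0 + t *\<^sub>R v0) < R / 2"
  shows "\<delta> * exp (- (\<kappa> * (norm v + norm v0 + 1) ^ 3)) \<le> h t x v"
proof -
  have euclidean_lower: "\<delta> \<le> h s y u"
    if "s \<in> {0..T}" "norm (y - (x0 + s *\<^sub>R v0)) < R" "norm (u - v0) < R" for s y u
    using lower that torus_dist_le_norm[of y "x0 + s *\<^sub>R v0"] by force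
  have coef: "a0 \<le> Rcoef \<beta> h s y \<and> Rcoef \<beta> h s y \<le> a1"
    if "s \<in> {0<..T}" "norm (y - (x0 + s *\<^sub>R v0)) < R" for s y
    using Rcoef_bounds[OF sol _ assms(2-5), of s y \<Lambda> v0] upper euclidean_lower that
    by (auto simp: a0_def a1_def)
  have "0 < a0" "a0 \<le> a1"
    using assms(4,5) mu_integral_indicator_ball_pos[of R v0] by (auto simp: a0_def a1_def)
  obtain x' where "norm (x' - (x0 + t *\<^sub>R v0)) < R / 2" and "\<And>s u. h s x u = h s x' u"
    using classical_solution_lift_near[OF sol x] by blast
  then show ?thesis
    using solution_lower_bound_near_trajectory[OF sol euclidean_lower coef \<open>0 < a0\<close> \<open>a0 \<le> a1\<close>
        assms(4,5) c1 \<kappa> t]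
    by simp
qed

theorem lemma4p6:
  fixes \<beta> lam \<Lambda> \<delta> R Tlow :: real and v0 :: "real^'n"
  assumes "0 \<le> \<beta>" "\<beta> \<le> 1" "0 < lam" "lam < \<Lambda>" "0 < \<delta>"
    "0 < R" "R \<le> 1" "0 < Tlow"
  shows "\<exists>C>0. \<forall>(T::real) (x0::real^'n) (h :: real \<Rightarrow> real^'n \<Rightarrow> real^'n \<Rightarrow> real).
     Tlow < T \<longrightarrow> T \<le> 1 \<longrightarrow>
     classical_solution \<beta> T h \<longrightarrow>
     (\<forall>t\<in>{0..T}. \<forall>x v. h t x v \<le> \<Lambda>) \<longrightarrow>
     (\<forall>t\<in>{0..T}. \<forall>x v. torus_dist x (x0 + t *\<^sub>R v0) < R \<and> norm (v - v0) < R
         \<longrightarrow> \<delta> \<le> h t x v) \<longrightarrow>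
     (\<forall>t\<in>{Tlow..T}. \<forall>x v. torus_dist x (x0 + t *\<^sub>R v0) < R / 2 \<longrightarrow>
         exp (- C * norm v ^ 4) / C \<le> h t x v)"
proof -
  define a0 where "a0 = min 1 (\<delta> * mu_integral (indicator (ball v0 R)))"
  define a1 where "a1 = max 1 (\<Lambda> * mu_integral (\<lambda>_::real^'n. 1))"
  have "0 < a0" "0 \<le> a1 * (2 * real CARD('n) + (norm v0)\<^sup>2)"
    using assms(5,6) mu_integral_indicator_ball_pos[of R v0] by (auto simp: a0_def a1_def)
  then obtain c1 where c1: "0 < c1" "c1 \<le> Tlow" "c1 \<le> 1" "(2 + 4 / R) * c1 \<le> 1 / 16"
    "a1 * (2 * real CARD('n) + (norm v0)\<^sup>2) * c1 \<le> R\<^sup>2 / 16" "16 \<le> 2 / (a0 * c1)"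
    using exists_time_scale[OF _ _ assms(6,8)] by blast
  define \<kappa> where "\<kappa> = 2 / (a0 * c1)"
  have "0 \<le> \<kappa>"
    using c1(6) unfolding \<kappa>_def by linarith
  then obtain C where "0 < C"
    and C: "\<And>r. 0 \<le> r \<Longrightarrow> exp (- C * r ^ 4) / C \<le> \<delta> * exp (- (\<kappa> * (r + norm v0 + 1) ^ 3))"
    using exists_quartic_gaussian_minorant[OF _ assms(5) norm_ge_zero] by blast
  show ?thesis
  proof (intro exI[of _ C] conjI \<open>0 < C\<close> allI impI ballI)
    fix T x0 h t x v
    assume sol: "classical_solution \<beta> T h" and upper: "\<forall>t\<in>{0..T}. \<forall>x v. h t x v \<le> \<Lambda>"
      and lower: "\<forall>t\<in>{0..T}. \<forall>x v. torus_dist x (x0 + t *\<^sub>R v0) < R \<and> norm (v - v0) < R \<longrightarrow> \<delta> \<le> h t x v"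
      and t: "t \<in> {Tlow..T}" and x: "torus_dist x (x0 + t *\<^sub>R v0) < R / 2"
    have "\<delta> * exp (- (\<kappa> * (norm v + norm v0 + 1) ^ 3)) \<le> h t x v"
      by (rule solution_lower_bound_on_torus[OF sol assms(1,2,5,6) upper lower a0_def a1_def c1(1,3,4,5)
          \<kappa>_def _ _ _ x]) (use c1(2,6) t in \<open>auto simp: \<kappa>_def\<close>)
    with C[OF norm_ge_zero] show "exp (- C * norm v ^ 4) / C \<le> h t x v"
      by (rule order_trans)
  qed
qed

end
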